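(* Let $k\in\mathbb{N}_0\cup\{\infty\}$, let $E,F$ be locally convex super vector spaces, $\mathcal{U}\subseteq\overline{E}^{(k)}$ an open subfunctor and $f\colon\mathcal{U}\to\overline{F}^{(k)}$ a natural transformation such that each $f_\Lambda$ is smooth. For $\Lambda\in\mathbf{Gr}^{(k)}$, $x\in\mathcal{U}_{\mathbb{R}}$, $n_0\in E_0\otimes\Lambda^+_{\bar 0}$ and $n_1\in E_1\otimes\Lambda_{\bar1}$, we have $x+n_0+n_1\in\mathcal{U}_\Lambda$ and $$f_\Lambda(x+n_0+n_1)=\sum_{m,l=0}^\infty\frac{1}{m!\,l!}d^{m+l}f_\Lambda(x)(\underbrace{n_0,\dots,n_0}_{m},\underbrace{n_1,\dots,n_1}_{l})=\sum_{i=0}^\infty\frac1{i!}d^if_\Lambda(x)(n_0+n_1,\dots,n_0+n_1),$$ where the sums have only finitely many nonzero terms.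
   Context: Grassmann algebras $\Lambda_n=\mathbb{R}[\lambda_1..\lambda_n]$ with anticommuting generators; $\Lambda_{\bar0}$, $\Lambda_{\bar1}$ spanned by the monomials $\lambda_I$ with $|I|$ even resp. odd; $\Lambda^+$ is the ideal spanned by $\lambda_I$, $I\neq\emptyset$, and $\Lambda^+_{\bar0}=\Lambda^+\cap\Lambda_{\bar0}$. $\mathbf{Gr}^{(k)}$: category of $\Lambda_0,\dots,\Lambda_k$ with parity-preserving unital homomorphisms. For a locally convex super vector space $E=E_0\oplus E_1$: $\overline{E}^{(k)}_\Lambda=(E_0\otimes\Lambda_{\bar0})\oplus(E_1\otimes\Lambda_{\bar1})$ (product topology), functorial via $\mathrm{id}\otimes\varrho$, with $\overline{E}_{\mathbb{R}}=E_0\subseteq\overline{E}_\Lambda$. An open subfunctor $\mathcal{U}$: open sets $\mathcal{U}_\Lambda\subseteq\overline{E}^{(k)}_\Lambda$ stable under all $\overline{E}^{(k)}_\varrho$. Smoothness in the sense of Bastiani. *)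

theory Defs
  imports Complex_Main "HOL-Library.Extended_Nat"
begin

definition seminorm_on :: "('a::real_vector \<Rightarrow> real) \<Rightarrow> bool" where
  "seminorm_on p \<longleftrightarrow> (\<forall>x. 0 \<le> p x) \<and> (\<forall>x y. p (x + y) \<le> p x + p y)
     \<and> (\<forall>c x. p (c *\<^sub>R x) = \<bar>c\<bar> * p x)"

definition lc_space :: "('a::real_vector \<Rightarrow> real) set \<Rightarrow> bool" where
  "lc_space S \<longleftrightarrow> (\<forall>p\<in>S. seminorm_on p) \<and> (\<forall>x. (\<forall>p\<in>S. p x = 0) \<longrightarrow> x = 0)"

section \<open>Grassmann algebras Lambda_n (generators indexed 0..n-1)\<close>

type_synonym grass = "nat set \<Rightarrow> real"

definition grass :: "nat \<Rightarrow> grass set" where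
  "grass n = {a. \<forall>I. a I \<noteq> 0 \<longrightarrow> I \<subseteq> {..<n}}"

definition gbasis :: "nat set \<Rightarrow> grass" where
  "gbasis I = (\<lambda>K. if K = I then 1 else 0)"

definition gsign :: "nat set \<Rightarrow> nat set \<Rightarrow> real" where
  "gsign I J = (-1) ^ card {(i, j). i \<in> I \<and> j \<in> J \<and> j < i}"

definition gmult :: "grass \<Rightarrow> grass \<Rightarrow> grass" where
  "gmult a b = (\<lambda>K. \<Sum>I\<in>Pow K. gsign I (K - I) * a I * b (K - I))"

definition gr_even :: "nat \<Rightarrow> grass set" where
  "gr_even n = {a \<in> grass n. \<forall>I. a I \<noteq> 0 \<longrightarrow> even (card I)}"

definition gr_odd :: "nat \<Rightarrow> grass set" where
  "gr_odd n = {a \<in> grass n. \<forall>I. a I \<noteq> 0 \<longrightarrow> odd (card I)}"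

definition gr_hom :: "nat \<Rightarrow> nat \<Rightarrow> (grass \<Rightarrow> grass) \<Rightarrow> bool" where
  "gr_hom n m \<rho> \<longleftrightarrow>
     (\<forall>a\<in>grass n. \<rho> a \<in> grass m)
   \<and> (\<forall>a\<in>grass n. \<forall>b\<in>grass n. \<rho> (\<lambda>I. a I + b I) = (\<lambda>I. \<rho> a I + \<rho> b I))
   \<and> (\<forall>c. \<forall>a\<in>grass n. \<rho> (\<lambda>I. c * a I) = (\<lambda>I. c * \<rho> a I))
   \<and> \<rho> (gbasis {}) = gbasis {}
   \<and> (\<forall>a\<in>grass n. \<forall>b\<in>grass n. \<rho> (gmult a b) = gmult (\<rho> a) (\<rho> b))
   \<and> \<rho> ` gr_even n \<subseteq> gr_even m
   \<and> \<rho> ` gr_odd n \<subseteq> gr_odd m"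

section \<open>The functor bar E: (E_0 tensor Lambda_even) + (E_1 tensor Lambda_odd)\<close>

text \<open>An element of E tensor Lambda_n is represented by its coefficient functions
  I \<mapsto> e_I (I a subset of {0..<n}); E = E_0 \<oplus> E_1 with E_0, E_1 given as types.\<close>
type_synonym ('a, 'b) sv = "(nat set \<Rightarrow> 'a) \<times> (nat set \<Rightarrow> 'b)"

definition sv_add :: "('a::real_vector, 'b::real_vector) sv \<Rightarrow> ('a, 'b) sv \<Rightarrow> ('a, 'b) sv" where
  "sv_add x y = (\<lambda>I. fst x I + fst y I, \<lambda>I. snd x I + snd y I)"

definition sv_diff :: "('a::real_vector, 'b::real_vector) sv \<Rightarrow> ('a, 'b) sv \<Rightarrow> ('a, 'b) sv" where
  "sv_diff x y = (\<lambda>I. fst x I - fst y I, \<lambda>I. snd x I - snd y I)"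

definition sv_scale :: "real \<Rightarrow> ('a::real_vector, 'b::real_vector) sv \<Rightarrow> ('a, 'b) sv" where
  "sv_scale c x = (\<lambda>I. c *\<^sub>R fst x I, \<lambda>I. c *\<^sub>R snd x I)"

definition sv_zero :: "('a::real_vector, 'b::real_vector) sv" where
  "sv_zero = (\<lambda>I. 0, \<lambda>I. 0)"

definition sv_sum :: "('i \<Rightarrow> ('a::real_vector, 'b::real_vector) sv) \<Rightarrow> 'i set \<Rightarrow> ('a, 'b) sv" where
  "sv_sum g A = (\<lambda>I. \<Sum>i\<in>A. fst (g i) I, \<lambda>I. \<Sum>i\<in>A. snd (g i) I)"

definition bar_space :: "nat \<Rightarrow> ('a::real_vector, 'b::real_vector) sv set" where
  "bar_space n = {x. (\<forall>I. fst x I \<noteq> 0 \<longrightarrow> I \<subseteq> {..<n} \<and> even (card I))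
                   \<and> (\<forall>I. snd x I \<noteq> 0 \<longrightarrow> I \<subseteq> {..<n} \<and> odd (card I))}"

text \<open>E_0 tensor Lambda^+_even and E_1 tensor Lambda_odd inside bar E_Lambda_n.\<close>
definition even_plus_part :: "nat \<Rightarrow> ('a::real_vector, 'b::real_vector) sv set" where
  "even_plus_part n = {x \<in> bar_space n. fst x {} = 0 \<and> snd x = (\<lambda>I. 0)}"

definition odd_part :: "nat \<Rightarrow> ('a::real_vector, 'b::real_vector) sv set" where
  "odd_part n = {x \<in> bar_space n. fst x = (\<lambda>I. 0)}"

definition bar_map :: "nat \<Rightarrow> (grass \<Rightarrow> grass) \<Rightarrow> ('a::real_vector, 'b::real_vector) sv \<Rightarrow> ('a, 'b) sv" where
  "bar_map n \<rho> x = (\<lambda>J. \<Sum>I\<in>Pow {..<n}. \<rho> (gbasis I) J *\<^sub>R fst x I,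
                    \<lambda>J. \<Sum>I\<in>Pow {..<n}. \<rho> (gbasis I) J *\<^sub>R snd x I)"

text \<open>Product topology on bar E_Lambda, given by the seminorms x \<mapsto> p(x_I).\<close>
definition sv_seminorms :: "('a::real_vector \<Rightarrow> real) set \<Rightarrow> ('b::real_vector \<Rightarrow> real) set
    \<Rightarrow> (('a, 'b) sv \<Rightarrow> real) set" where
  "sv_seminorms SA SB = {(\<lambda>x. p (fst x I)) | p I. p \<in> SA} \<union> {(\<lambda>x. q (snd x I)) | q I. q \<in> SB}"

definition sv_open :: "('a::real_vector \<Rightarrow> real) set \<Rightarrow> ('b::real_vector \<Rightarrow> real) set \<Rightarrow> nat
    \<Rightarrow> ('a, 'b) sv set \<Rightarrow> bool" where
  "sv_open SA SB n U \<longleftrightarrow> U \<subseteq> bar_space n \<and>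
     (\<forall>x\<in>U. \<exists>P \<epsilon>. finite P \<and> P \<subseteq> sv_seminorms SA SB \<and> \<epsilon> > 0 \<and>
        {y \<in> bar_space n. \<forall>p\<in>P. p (sv_diff y x) < \<epsilon>} \<subseteq> U)"

definition sv_lim0 :: "('a::real_vector \<Rightarrow> real) set \<Rightarrow> ('b::real_vector \<Rightarrow> real) set
    \<Rightarrow> (real \<Rightarrow> ('a, 'b) sv) \<Rightarrow> ('a, 'b) sv \<Rightarrow> bool" where
  "sv_lim0 SC SD g w \<longleftrightarrow> (\<forall>q\<in>sv_seminorms SC SD. \<forall>\<epsilon>>0. \<exists>\<delta>>0. \<forall>t.
       t \<noteq> 0 \<and> \<bar>t\<bar> < \<delta> \<longrightarrow> q (sv_diff (g t) w) < \<epsilon>)"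

definition diff_quot :: "(('a::real_vector, 'b::real_vector) sv \<Rightarrow> ('c::real_vector, 'd::real_vector) sv)
    \<Rightarrow> ('a, 'b) sv \<Rightarrow> ('a, 'b) sv \<Rightarrow> real \<Rightarrow> ('c, 'd) sv" where
  "diff_quot f x h t = sv_scale (1 / t) (sv_diff (f (sv_add x (sv_scale t h))) (f x))"

definition dir_deriv :: "('c::real_vector \<Rightarrow> real) set \<Rightarrow> ('d::real_vector \<Rightarrow> real) set
    \<Rightarrow> (('a::real_vector, 'b::real_vector) sv \<Rightarrow> ('c, 'd) sv) \<Rightarrow> ('a, 'b) sv \<Rightarrow> ('a, 'b) sv \<Rightarrow> ('c, 'd) sv" where
  "dir_deriv SC SD f x h = (THE w. sv_lim0 SC SD (diff_quot f x h) w)"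

primrec diff_iter :: "('c::real_vector \<Rightarrow> real) set \<Rightarrow> ('d::real_vector \<Rightarrow> real) set
    \<Rightarrow> (('a::real_vector, 'b::real_vector) sv \<Rightarrow> ('c, 'd) sv) \<Rightarrow> ('a, 'b) sv \<Rightarrow> ('a, 'b) sv list \<Rightarrow> ('c, 'd) sv" where
  "diff_iter SC SD f x [] = f x"
| "diff_iter SC SD f x (h # hs) = dir_deriv SC SD (\<lambda>y. diff_iter SC SD f y hs) x h"

text \<open>Continuity of a map on U \<times> (bar E_n)^k, arguments given as list x # hs.\<close>
definition sv_cont_lists :: "('a::real_vector \<Rightarrow> real) set \<Rightarrow> ('b::real_vector \<Rightarrow> real) set
    \<Rightarrow> ('c::real_vector \<Rightarrow> real) set \<Rightarrow> ('d::real_vector \<Rightarrow> real) set \<Rightarrow> nat \<Rightarrow> ('a, 'b) sv set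
    \<Rightarrow> nat \<Rightarrow> (('a, 'b) sv list \<Rightarrow> ('c, 'd) sv) \<Rightarrow> bool" where
  "sv_cont_lists SA SB SC SD n U k g \<longleftrightarrow>
     (\<forall>xs. length xs = Suc k \<and> hd xs \<in> U \<and> set xs \<subseteq> bar_space n \<longrightarrow>
       (\<forall>q\<in>sv_seminorms SC SD. \<forall>\<epsilon>>0. \<exists>P \<delta>. finite P \<and> P \<subseteq> sv_seminorms SA SB \<and> \<delta> > 0 \<and>
          (\<forall>ys. length ys = Suc k \<and> hd ys \<in> U \<and> set ys \<subseteq> bar_space n \<and>
                (\<forall>i<Suc k. \<forall>p\<in>P. p (sv_diff (ys ! i) (xs ! i)) < \<delta>)
                \<longrightarrow> q (sv_diff (g ys) (g xs)) < \<epsilon>)))"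

definition bastiani_smooth :: "('a::real_vector \<Rightarrow> real) set \<Rightarrow> ('b::real_vector \<Rightarrow> real) set
    \<Rightarrow> ('c::real_vector \<Rightarrow> real) set \<Rightarrow> ('d::real_vector \<Rightarrow> real) set \<Rightarrow> nat \<Rightarrow> ('a, 'b) sv set
    \<Rightarrow> (('a, 'b) sv \<Rightarrow> ('c, 'd) sv) \<Rightarrow> bool" where
  "bastiani_smooth SA SB SC SD n U f \<longleftrightarrow>
     sv_open SA SB n U
   \<and> (\<forall>x\<in>U. f x \<in> bar_space n)
   \<and> (\<forall>x\<in>U. \<forall>h hs. set (h # hs) \<subseteq> bar_space n \<longrightarrow>
        (\<exists>w. sv_lim0 SC SD (diff_quot (\<lambda>y. diff_iter SC SD f y hs) x h) w))
   \<and> (\<forall>k. sv_cont_lists SA SB SC SD n U k (\<lambda>ys. diff_iter SC SD f (hd ys) (tl ys)))"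

definition open_subfunctor :: "enat \<Rightarrow> ('a::real_vector \<Rightarrow> real) set \<Rightarrow> ('b::real_vector \<Rightarrow> real) set
    \<Rightarrow> (nat \<Rightarrow> ('a, 'b) sv set) \<Rightarrow> bool" where
  "open_subfunctor k SA SB U \<longleftrightarrow>
     (\<forall>n. enat n \<le> k \<longrightarrow> sv_open SA SB n (U n))
   \<and> (\<forall>n m \<rho>. enat n \<le> k \<and> enat m \<le> k \<and> gr_hom n m \<rho> \<longrightarrow> bar_map n \<rho> ` U n \<subseteq> U m)"

definition nat_transf :: "enat \<Rightarrow> (nat \<Rightarrow> ('a::real_vector, 'b::real_vector) sv set)
    \<Rightarrow> (nat \<Rightarrow> ('a, 'b) sv \<Rightarrow> ('c::real_vector, 'd::real_vector) sv) \<Rightarrow> bool" where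
  "nat_transf k U f \<longleftrightarrow>
     (\<forall>n. enat n \<le> k \<longrightarrow> (\<forall>x\<in>U n. f n x \<in> bar_space n))
   \<and> (\<forall>n m \<rho> x. enat n \<le> k \<and> enat m \<le> k \<and> gr_hom n m \<rho> \<and> x \<in> U n
        \<longrightarrow> bar_map n \<rho> (f n x) = f m (bar_map n \<rho> x))"

end

theory Submission
  imports Defs
begin

text \<open>The dilations \<open>\<lambda>\<^sub>i \<mapsto> s \<lambda>\<^sub>i\<close> are endomorphisms of \<open>\<Lambda>\<^sub>n\<close> in \<open>Gr\<close>,
  so by naturality \<open>f\<^sub>\<Lambda>\<close> commutes with them and \<open>\<U>\<^sub>\<Lambda>\<close> is stable under them. For
  directions without body, the \<open>\<lambda>\<^sub>I\<close>-component of \<open>d\<^sup>N f\<^sub>\<Lambda>(y)\<close> is thereby scaled by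
  \<open>s\<^bsup>|I|\<^esup>\<close> and at the same time equals \<open>s\<^sup>N\<close> times a quantity that stays bounded as
  \<open>s \<rightarrow> 0\<close>, by continuity of the differentials; as \<open>|I| \<le> n\<close>, all differentials of order
  \<open>N > n\<close> vanish in such directions. Dilating the soul towards the body point \<open>x\<close> shows
  \<open>x + n\<^sub>0 + n\<^sub>1 \<in> \<U>\<^sub>\<Lambda>\<close>, and Taylor's formula along \<open>t \<mapsto> y + t h\<close> then terminates
  with zero remainder. Expanding first in the direction \<open>n\<^sub>1\<close> and then in \<open>n\<^sub>0\<close>, or once
  in the direction \<open>n\<^sub>0 + n\<^sub>1\<close>, gives the two formulas.\<close>

section \<open>Seminorms and curves in locally convex spaces\<close>

lemma seminorm_zero: "seminorm_on p \<Longrightarrow> p 0 = 0"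
  unfolding seminorm_on_def by (metis abs_0 mult_zero_left scaleR_zero_left)

lemma seminorm_minus: "seminorm_on p \<Longrightarrow> p (- x) = p x"
  unfolding seminorm_on_def by (metis abs_minus_cancel abs_one mult_1 scaleR_minus1_left)

lemma seminorm_nonneg: "seminorm_on p \<Longrightarrow> 0 \<le> p x"
  unfolding seminorm_on_def by auto

lemma seminorm_triangle: "seminorm_on p \<Longrightarrow> p (x + y) \<le> p x + p y"
  unfolding seminorm_on_def by auto

lemma seminorm_scaleR: "seminorm_on p \<Longrightarrow> p (c *\<^sub>R x) = \<bar>c\<bar> * p x"
  unfolding seminorm_on_def by auto

lemma seminorm_diff_triangle: "seminorm_on p \<Longrightarrow> p (x - z) \<le> p (x - y) + p (y - z)"
  by (metis seminorm_triangle diff_add_cancel add_diff_eq)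

lemma seminorm_diff_commute: "seminorm_on p \<Longrightarrow> p (x - y) = p (y - x)"
  by (metis minus_diff_eq seminorm_minus)

lemma seminorm_reverse_triangle: "seminorm_on p \<Longrightarrow> \<bar>p x - p y\<bar> \<le> p (x - y)"
  using seminorm_diff_triangle[of p x 0 y] seminorm_diff_triangle[of p y 0 x]
    seminorm_diff_commute[of p x y] by auto

lemma seminorm_sum_scaleR_le:
  assumes "seminorm_on p" and "finite A"
  shows "p (\<Sum>j\<in>A. c j *\<^sub>R a j) \<le> (\<Sum>j\<in>A. \<bar>c j\<bar> * p (a j))"
  using assms(2)
proof (induction A rule: finite_induct)
  case empty
  then show ?case by (simp add: seminorm_zero[OF assms(1)])
next
  case (insert x F)
  then show ?case
    using seminorm_triangle[OF assms(1), of "c x *\<^sub>R a x" "\<Sum>j\<in>F. c j *\<^sub>R a j"]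
    by (simp add: seminorm_scaleR[OF assms(1)])
qed

lemma lc_space_seminorm: "lc_space S \<Longrightarrow> p \<in> S \<Longrightarrow> seminorm_on p"
  unfolding lc_space_def by auto

lemma lc_space_separating: "lc_space S \<Longrightarrow> (\<And>p. p \<in> S \<Longrightarrow> p x = 0) \<Longrightarrow> x = 0"
  unfolding lc_space_def by auto

definition has_seminorm_derivative :: "('v::real_vector \<Rightarrow> real) set \<Rightarrow> (real \<Rightarrow> 'v) \<Rightarrow> (real \<Rightarrow> 'v) \<Rightarrow> bool" where
  "has_seminorm_derivative S g g' \<longleftrightarrow>
     (\<forall>t. \<forall>p\<in>S. ((\<lambda>\<tau>. p ((1 / \<tau>) *\<^sub>R (g (t + \<tau>) - g t) - g' t)) \<longlongrightarrow> 0) (at 0))"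

lemma has_seminorm_derivative_zero_imp_constant:
  assumes S: "lc_space S" and g: "has_seminorm_derivative S g (\<lambda>_. 0)"
  shows "g t = g 0"
proof -
  have "p (g t - g 0) = 0" if p: "p \<in> S" for p
  proof -
    have sp: "seminorm_on p" using lc_space_seminorm[OF S p] .
    define \<phi> where "\<phi> u = p (g u - g 0)" for u
    have "(\<phi> has_real_derivative 0) (at u)" for u
    proof -
      have quot: "\<bar>(\<phi> (u + \<tau>) - \<phi> u) / \<tau>\<bar> \<le> p ((1 / \<tau>) *\<^sub>R (g (u + \<tau>) - g u) - 0)" for \<tau>
      proof -
        have "\<bar>\<phi> (u + \<tau>) - \<phi> u\<bar> \<le> p (g (u + \<tau>) - g u)"
          using seminorm_reverse_triangle[OF sp, of "g (u + \<tau>) - g 0" "g u - g 0"]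
          unfolding \<phi>_def by simp
        then show ?thesis
          by (simp add: seminorm_scaleR[OF sp] abs_divide divide_right_mono)
      qed
      have "((\<lambda>\<tau>. p ((1 / \<tau>) *\<^sub>R (g (u + \<tau>) - g u) - 0)) \<longlongrightarrow> 0) (at 0)"
        using g p unfolding has_seminorm_derivative_def by blast
      then have "((\<lambda>\<tau>. (\<phi> (u + \<tau>) - \<phi> u) / \<tau>) \<longlongrightarrow> 0) (at 0)"
        by (rule tendsto_0_le[where K = 1]) (use quot in \<open>simp add: real_norm_def abs_of_nonneg[OF seminorm_nonneg[OF sp]]\<close>)
      then show ?thesis unfolding DERIV_def .
    qed
    then have "\<phi> t = \<phi> 0" by (intro DERIV_isconst_all) auto
    then show ?thesis unfolding \<phi>_def by (simp add: seminorm_zero[OF sp])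
  qed
  then have "g t - g 0 = 0" by (rule lc_space_separating[OF S])
  then show ?thesis by simp
qed

lemma has_seminorm_derivative_diff:
  assumes S: "\<forall>p\<in>S. seminorm_on p"
    and g: "has_seminorm_derivative S g g'" and h: "has_seminorm_derivative S h h'"
  shows "has_seminorm_derivative S (\<lambda>t. g t - h t) (\<lambda>t. g' t - h' t)"
  unfolding has_seminorm_derivative_def
proof (intro allI ballI)
  fix t p assume p: "p \<in> S"
  have sp: "seminorm_on p" using S p by auto
  let ?eg = "\<lambda>\<tau>. (1 / \<tau>) *\<^sub>R (g (t + \<tau>) - g t) - g' t"
  let ?eh = "\<lambda>\<tau>. (1 / \<tau>) *\<^sub>R (h (t + \<tau>) - h t) - h' t"
  have lim: "((\<lambda>\<tau>. p (?eg \<tau>) + p (?eh \<tau>)) \<longlongrightarrow> 0) (at 0)"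
    using tendsto_add[of "\<lambda>\<tau>. p (?eg \<tau>)" 0 _ "\<lambda>\<tau>. p (?eh \<tau>)" 0] g h p
    unfolding has_seminorm_derivative_def by simp
  have bound: "\<bar>p ((1 / \<tau>) *\<^sub>R ((g (t + \<tau>) - h (t + \<tau>)) - (g t - h t)) - (g' t - h' t))\<bar>
      \<le> p (?eg \<tau>) + p (?eh \<tau>)" for \<tau>
  proof -
    have "(1 / \<tau>) *\<^sub>R ((g (t + \<tau>) - h (t + \<tau>)) - (g t - h t)) - (g' t - h' t) = ?eg \<tau> + - ?eh \<tau>"
      by (simp add: algebra_simps)
    moreover have "p (?eg \<tau> + - ?eh \<tau>) \<le> p (?eg \<tau>) + p (?eh \<tau>)"
      using seminorm_triangle[OF sp, of "?eg \<tau>" "- ?eh \<tau>"] seminorm_minus[OF sp, of "?eh \<tau>"]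
      by linarith
    ultimately show ?thesis unfolding abs_of_nonneg[OF seminorm_nonneg[OF sp]] by (simp only:)
  qed
  show "((\<lambda>\<tau>. p ((1 / \<tau>) *\<^sub>R ((g (t + \<tau>) - h (t + \<tau>)) - (g t - h t))
      - (g' t - h' t))) \<longlongrightarrow> 0) (at 0)"
    using bound seminorm_nonneg[OF sp]
    by (intro tendsto_0_le[where K = 1, OF lim] always_eventually) (simp add: real_norm_def)
qed

lemma has_seminorm_derivative_sum_scaleR:
  assumes S: "\<forall>p\<in>S. seminorm_on p" and A: "finite A"
    and d: "\<And>j t. j \<in> A \<Longrightarrow> (\<phi> j has_real_derivative \<phi>' j t) (at t)"
  shows "has_seminorm_derivative S (\<lambda>t. \<Sum>j\<in>A. \<phi> j t *\<^sub>R a j) (\<lambda>t. \<Sum>j\<in>A. \<phi>' j t *\<^sub>R a j)"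
  unfolding has_seminorm_derivative_def
proof (intro allI ballI)
  fix t p assume p: "p \<in> S"
  have sp: "seminorm_on p" using S p by auto
  define e where "e \<tau> = (\<Sum>j\<in>A. \<bar>(\<phi> j (t + \<tau>) - \<phi> j t) / \<tau> - \<phi>' j t\<bar> * p (a j))" for \<tau>
  have "((\<lambda>\<tau>. \<bar>(\<phi> j (t + \<tau>) - \<phi> j t) / \<tau> - \<phi>' j t\<bar> * p (a j)) \<longlongrightarrow> 0) (at 0)" if "j \<in> A" for j
  proof -
    have "((\<lambda>\<tau>. (\<phi> j (t + \<tau>) - \<phi> j t) / \<tau>) \<longlongrightarrow> \<phi>' j t) (at 0)"
      using d[OF that] unfolding DERIV_def .
    then have "((\<lambda>\<tau>. \<bar>(\<phi> j (t + \<tau>) - \<phi> j t) / \<tau> - \<phi>' j t\<bar> * p (a j)) \<longlongrightarrow>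
        \<bar>\<phi>' j t - \<phi>' j t\<bar> * p (a j)) (at 0)"
      by (intro tendsto_intros)
    then show ?thesis by simp
  qed
  then have e0: "(e \<longlongrightarrow> 0) (at 0)" unfolding e_def by (intro tendsto_null_sum) auto
  have bound: "\<bar>p ((1 / \<tau>) *\<^sub>R ((\<Sum>j\<in>A. \<phi> j (t + \<tau>) *\<^sub>R a j) - (\<Sum>j\<in>A. \<phi> j t *\<^sub>R a j))
      - (\<Sum>j\<in>A. \<phi>' j t *\<^sub>R a j))\<bar> \<le> e \<tau>" for \<tau>
  proof -
    have "(1 / \<tau>) *\<^sub>R ((\<Sum>j\<in>A. \<phi> j (t + \<tau>) *\<^sub>R a j) - (\<Sum>j\<in>A. \<phi> j t *\<^sub>R a j))
        - (\<Sum>j\<in>A. \<phi>' j t *\<^sub>R a j) = (\<Sum>j\<in>A. ((\<phi> j (t + \<tau>) - \<phi> j t) / \<tau> - \<phi>' j t) *\<^sub>R a j)"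
      by (simp add: scaleR_sum_right sum_subtractf[symmetric] scaleR_diff_left
          diff_divide_distrib algebra_simps)
    then show ?thesis
      using seminorm_sum_scaleR_le[OF sp A] seminorm_nonneg[OF sp] unfolding e_def by simp
  qed
  have "0 \<le> e \<tau>" for \<tau>
    unfolding e_def using seminorm_nonneg[OF sp] by (intro sum_nonneg) simp
  with bound show "((\<lambda>\<tau>. p ((1 / \<tau>) *\<^sub>R ((\<Sum>j\<in>A. \<phi> j (t + \<tau>) *\<^sub>R a j)
      - (\<Sum>j\<in>A. \<phi> j t *\<^sub>R a j)) - (\<Sum>j\<in>A. \<phi>' j t *\<^sub>R a j))) \<longlongrightarrow> 0) (at 0)"
    by (intro tendsto_0_le[where K = 1, OF e0] always_eventually) (simp add: real_norm_def)
qed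

lemma seminorm_taylor_terminating:
  assumes S: "lc_space S"
  shows "(\<forall>j<N. has_seminorm_derivative S (c j) (c (Suc j))) \<Longrightarrow> (\<forall>t. c N t = 0) \<Longrightarrow>
         c 0 t = (\<Sum>j<N. (t ^ j / fact j) *\<^sub>R c j 0)"
proof (induction N arbitrary: c t)
  case 0
  then show ?case by simp
next
  case (Suc N)
  have S': "\<forall>p\<in>S. seminorm_on p" using S lc_space_seminorm by blast
  let ?P = "\<lambda>t. \<Sum>j<Suc N. (t ^ j / fact j) *\<^sub>R c j 0"
  have IH: "c 1 t = (\<Sum>j<N. (t ^ j / fact j) *\<^sub>R c (Suc j) 0)" for t
    using Suc.IH[of "\<lambda>j. c (Suc j)" t] Suc.prems by auto
  have dP: "has_seminorm_derivative S ?P (\<lambda>t. \<Sum>j<Suc N. (real j * t ^ (j - 1) / fact j) *\<^sub>R c j 0)"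
    by (rule has_seminorm_derivative_sum_scaleR[OF S']) (auto intro!: derivative_eq_intros)
  have "(\<Sum>j<Suc N. (real j * t ^ (j - 1) / fact j) *\<^sub>R c j 0) = c 1 t" for t
  proof -
    have "(\<Sum>j<Suc N. (real j * t ^ (j - 1) / fact j) *\<^sub>R c j 0)
        = (\<Sum>j<N. (real (Suc j) * t ^ j / fact (Suc j)) *\<^sub>R c (Suc j) 0)"
      by (subst sum.lessThan_Suc_shift) simp
    also have "\<dots> = (\<Sum>j<N. (t ^ j / fact j) *\<^sub>R c (Suc j) 0)"
      by (intro sum.cong refl) (simp add: fact_Suc del: of_nat_Suc)
    finally show ?thesis using IH[of t] by simp
  qed
  moreover have "has_seminorm_derivative S (c 0) (c 1)" using Suc.prems by auto
  ultimately have "has_seminorm_derivative S (\<lambda>t. c 0 t - ?P t) (\<lambda>t. c 1 t - c 1 t)"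
    using has_seminorm_derivative_diff[OF S' _ dP] by presburger
  then have "c 0 t - ?P t = c 0 0 - ?P 0"
    by (intro has_seminorm_derivative_zero_imp_constant[OF S]) simp
  also have "?P 0 = c 0 0"
    by (subst sum.lessThan_Suc_shift) simp
  finally show ?case by simp
qed

lemma sv_eqI: "(\<And>I. fst x I = fst y I) \<Longrightarrow> (\<And>I. snd x I = snd y I) \<Longrightarrow> x = y"
  by (simp add: prod_eq_iff fun_eq_iff)

text \<open>Diagonal endomorphisms of \<open>\<Lambda>\<^sub>n\<close>, such as dilations, act on \<open>E \<otimes> \<Lambda>\<^sub>n\<close> in this way.\<close>
definition sv_cmul :: "(nat set \<Rightarrow> real) \<Rightarrow> ('a::real_vector, 'b::real_vector) sv \<Rightarrow> ('a, 'b) sv" where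
  "sv_cmul c z = (\<lambda>I. c I *\<^sub>R fst z I, \<lambda>I. c I *\<^sub>R snd z I)"

lemma sv_scale_eq_cmul: "sv_scale c z = sv_cmul (\<lambda>_. c) z"
  unfolding sv_scale_def sv_cmul_def by simp

lemma sv_cmul_diff: "sv_cmul c (sv_diff a b) = sv_diff (sv_cmul c a) (sv_cmul c b)"
  by (rule sv_eqI) (simp_all add: sv_diff_def sv_cmul_def algebra_simps)

lemma sv_diff_cmul_left: "sv_diff (sv_cmul c a) (sv_cmul d a) = sv_cmul (\<lambda>I. c I - d I) a"
  by (rule sv_eqI) (simp_all add: sv_diff_def sv_cmul_def algebra_simps)

lemma sv_cmul_add: "sv_cmul c (sv_add a b) = sv_add (sv_cmul c a) (sv_cmul c b)"
  by (rule sv_eqI) (simp_all add: sv_add_def sv_cmul_def algebra_simps)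

lemma sv_cmul_cmul: "sv_cmul c (sv_cmul d a) = sv_cmul (\<lambda>I. c I * d I) a"
  by (rule sv_eqI) (simp_all add: sv_cmul_def)

lemma sv_cmul_scale: "sv_cmul c (sv_scale a h) = sv_scale a (sv_cmul c h)"
  by (rule sv_eqI) (simp_all add: sv_scale_def sv_cmul_def)

lemma sv_scale_scale: "sv_scale a (sv_scale b h) = sv_scale (a * b) h"
  by (rule sv_eqI) (simp_all add: sv_scale_def)

lemma sv_scale_1 [simp]: "sv_scale 1 h = h"
  by (rule sv_eqI) (simp_all add: sv_scale_def)

lemma sv_scale_0_left [simp]: "sv_scale 0 z = sv_zero"
  by (rule sv_eqI) (simp_all add: sv_scale_def sv_zero_def)

lemma sv_scale_zero [simp]: "sv_scale c sv_zero = sv_zero"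
  by (rule sv_eqI) (simp_all add: sv_scale_def sv_zero_def)

lemma sv_add_zero_right [simp]: "sv_add y sv_zero = y"
  by (rule sv_eqI) (simp_all add: sv_add_def sv_zero_def)

lemma sv_diff_zero_right [simp]: "sv_diff a sv_zero = a"
  by (rule sv_eqI) (simp_all add: sv_diff_def sv_zero_def)

lemma sv_diff_add_cancel_left [simp]: "sv_diff (sv_add x w) x = w"
  by (rule sv_eqI) (simp_all add: sv_diff_def sv_add_def)

lemma sv_diff_add_add_left: "sv_diff (sv_add x a) (sv_add x b) = sv_diff a b"
  by (rule sv_eqI) (simp_all add: sv_diff_def sv_add_def)

lemma sv_add_assoc: "sv_add (sv_add x a) b = sv_add x (sv_add a b)"
  by (rule sv_eqI) (simp_all add: sv_add_def add.assoc)

lemma sv_add_line_shift: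
  "sv_add (sv_add y (sv_scale t h)) (sv_scale \<tau> h) = sv_add y (sv_scale (t + \<tau>) h)"
  by (rule sv_eqI) (simp_all add: sv_add_def sv_scale_def algebra_simps)

lemma sv_sum_support:
  assumes "finite A" and "\<And>i. i \<notin> A \<Longrightarrow> g i = sv_zero"
  shows "finite {i. g i \<noteq> sv_zero}" and "sv_sum g {i. g i \<noteq> sv_zero} = sv_sum g A"
proof -
  have sub: "{i. g i \<noteq> sv_zero} \<subseteq> A" using assms(2) by blast
  then show "finite {i. g i \<noteq> sv_zero}" using assms(1) by (rule finite_subset)
  have "\<forall>i\<in>A - {i. g i \<noteq> sv_zero}. fst (g i) I = 0"
    and "\<forall>i\<in>A - {i. g i \<noteq> sv_zero}. snd (g i) I = 0" for I
    by (simp_all add: sv_zero_def)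
  then have "(\<Sum>i\<in>{i. g i \<noteq> sv_zero}. fst (g i) I) = (\<Sum>i\<in>A. fst (g i) I)"
    and "(\<Sum>i\<in>{i. g i \<noteq> sv_zero}. snd (g i) I) = (\<Sum>i\<in>A. snd (g i) I)" for I
    by (simp_all add: sum.mono_neutral_left[OF assms(1) sub])
  then show "sv_sum g {i. g i \<noteq> sv_zero} = sv_sum g A"
    unfolding sv_sum_def by simp
qed

lemma sum_scaleR_sum_swap:
  fixes v :: "'i \<Rightarrow> 'j \<Rightarrow> 'v::real_vector"
  shows "(\<Sum>l\<in>B. a l *\<^sub>R (\<Sum>m\<in>A. b m *\<^sub>R v m l)) = (\<Sum>m\<in>A. \<Sum>l\<in>B. (b m * a l) *\<^sub>R v m l)"
proof -
  have "(\<Sum>l\<in>B. a l *\<^sub>R (\<Sum>m\<in>A. b m *\<^sub>R v m l)) = (\<Sum>l\<in>B. \<Sum>m\<in>A. (b m * a l) *\<^sub>R v m l)"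
    by (simp add: scaleR_sum_right mult.commute)
  also have "\<dots> = (\<Sum>m\<in>A. \<Sum>l\<in>B. (b m * a l) *\<^sub>R v m l)"
    by (rule sum.swap)
  finally show ?thesis .
qed

lemma sv_sum_scale_sv_sum:
  "sv_sum (\<lambda>l. sv_scale (a l) (sv_sum (\<lambda>m. sv_scale (b m) (g m l)) A)) B
    = sv_sum (\<lambda>(m, l). sv_scale (b m * a l) (g m l)) (A \<times> B)"
  by (rule sv_eqI) (simp_all add: sv_sum_def sv_scale_def sum.cartesian_product' sum_scaleR_sum_swap)

lemma sv_seminorms_cases:
  assumes "q \<in> sv_seminorms SA SB"
  obtains p I where "p \<in> SA" "q = (\<lambda>x. p (fst x I))"
    | p I where "p \<in> SB" "q = (\<lambda>x. p (snd x I))"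
  using assms unfolding sv_seminorms_def by blast

lemma sv_seminorms_fstI: "p \<in> SA \<Longrightarrow> (\<lambda>x. p (fst x I)) \<in> sv_seminorms SA SB"
  unfolding sv_seminorms_def by blast

lemma sv_seminorms_sndI: "p \<in> SB \<Longrightarrow> (\<lambda>x. p (snd x I)) \<in> sv_seminorms SA SB"
  unfolding sv_seminorms_def by blast

definition sv_tendsto :: "('a::real_vector \<Rightarrow> real) set \<Rightarrow> ('b::real_vector \<Rightarrow> real) set
    \<Rightarrow> ('i \<Rightarrow> ('a, 'b) sv) \<Rightarrow> ('a, 'b) sv \<Rightarrow> 'i filter \<Rightarrow> bool" where
  "sv_tendsto SA SB g w F \<longleftrightarrow> (\<forall>q\<in>sv_seminorms SA SB. ((\<lambda>i. q (sv_diff (g i) w)) \<longlongrightarrow> 0) F)"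

lemma sv_tendsto_compose:
  assumes "sv_tendsto SA SB g w F" and "filterlim \<phi> F G"
  shows "sv_tendsto SA SB (\<lambda>i. g (\<phi> i)) w G"
  unfolding sv_tendsto_def
proof
  fix q assume "q \<in> sv_seminorms SA SB"
  then have "((\<lambda>i. q (sv_diff (g i) w)) \<longlongrightarrow> 0) F" using assms(1) unfolding sv_tendsto_def by blast
  then show "((\<lambda>i. q (sv_diff (g (\<phi> i)) w)) \<longlongrightarrow> 0) G" by (rule filterlim_compose[OF _ assms(2)])
qed

lemma sv_tendsto_cong:
  assumes "\<forall>\<^sub>F i in F. g i = g' i" and "sv_tendsto SA SB g w F"
  shows "sv_tendsto SA SB g' w F"
  unfolding sv_tendsto_def
proof
  fix q assume "q \<in> sv_seminorms SA SB"
  then have "((\<lambda>i. q (sv_diff (g i) w)) \<longlongrightarrow> 0) F" using assms(2) unfolding sv_tendsto_def by blast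
  moreover have "\<forall>\<^sub>F i in F. q (sv_diff (g i) w) = q (sv_diff (g' i) w)"
    using assms(1) by (rule eventually_mono) simp
  ultimately show "((\<lambda>i. q (sv_diff (g' i) w)) \<longlongrightarrow> 0) F"
    by (simp add: tendsto_cong)
qed

lemma sv_tendsto_add_left:
  "sv_tendsto SA SB g w F \<Longrightarrow> sv_tendsto SA SB (\<lambda>i. sv_add x (g i)) (sv_add x w) F"
  unfolding sv_tendsto_def sv_diff_add_add_left .

context
  fixes SA :: "('a::real_vector \<Rightarrow> real) set" and SB :: "('b::real_vector \<Rightarrow> real) set"
  assumes lcA: "lc_space SA" and lcB: "lc_space SB"
begin

lemma sv_seminorm_nonneg: "q \<in> sv_seminorms SA SB \<Longrightarrow> 0 \<le> q z"
  by (erule sv_seminorms_cases)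
    (auto simp: seminorm_nonneg lc_space_seminorm[OF lcA] lc_space_seminorm[OF lcB])

lemma sv_seminorm_cmul: "q \<in> sv_seminorms SA SB \<Longrightarrow> \<exists>I. \<forall>c z. q (sv_cmul c z) = \<bar>c I\<bar> * q z"
  by (erule sv_seminorms_cases)
    (auto simp: sv_cmul_def seminorm_scaleR lc_space_seminorm[OF lcA] lc_space_seminorm[OF lcB])

lemma sv_seminorm_scale: "q \<in> sv_seminorms SA SB \<Longrightarrow> q (sv_scale c z) = \<bar>c\<bar> * q z"
  unfolding sv_scale_eq_cmul using sv_seminorm_cmul by fastforce

lemma sv_seminorm_diff_triangle:
  "q \<in> sv_seminorms SA SB \<Longrightarrow> q (sv_diff a c) \<le> q (sv_diff a b) + q (sv_diff b c)"
  by (erule sv_seminorms_cases)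
    (auto simp: sv_diff_def intro: seminorm_diff_triangle lc_space_seminorm[OF lcA] lc_space_seminorm[OF lcB])

lemma sv_seminorm_diff_commute: "q \<in> sv_seminorms SA SB \<Longrightarrow> q (sv_diff a b) = q (sv_diff b a)"
  by (erule sv_seminorms_cases)
    (auto simp: sv_diff_def intro: seminorm_diff_commute lc_space_seminorm[OF lcA] lc_space_seminorm[OF lcB])

lemma sv_seminorms_separating: "(\<And>q. q \<in> sv_seminorms SA SB \<Longrightarrow> q (sv_diff a b) = 0) \<Longrightarrow> a = b"
proof (rule sv_eqI)
  assume H: "\<And>q. q \<in> sv_seminorms SA SB \<Longrightarrow> q (sv_diff a b) = 0"
  fix I
  have "fst a I - fst b I = 0"
    using H[OF sv_seminorms_fstI] by (intro lc_space_separating[OF lcA]) (simp add: sv_diff_def)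
  then show "fst a I = fst b I" by simp
  have "snd a I - snd b I = 0"
    using H[OF sv_seminorms_sndI] by (intro lc_space_separating[OF lcB]) (simp add: sv_diff_def)
  then show "snd a I = snd b I" by simp
qed

lemma sv_seminorm_tendsto_0_iff:
  "q \<in> sv_seminorms SA SB \<Longrightarrow> ((\<lambda>i. q (f i)) \<longlongrightarrow> 0) F \<longleftrightarrow> (\<forall>\<epsilon>>0. \<forall>\<^sub>F i in F. q (f i) < \<epsilon>)"
  by (simp add: tendsto_iff dist_real_def abs_of_nonneg sv_seminorm_nonneg)

lemma sv_lim0_iff_sv_tendsto: "sv_lim0 SA SB g w \<longleftrightarrow> sv_tendsto SA SB g w (at 0)"
  unfolding sv_lim0_def sv_tendsto_def
proof (intro ball_cong refl)
  fix q assume "q \<in> sv_seminorms SA SB"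
  then show "(\<forall>\<epsilon>>0. \<exists>\<delta>>0. \<forall>t. t \<noteq> 0 \<and> \<bar>t\<bar> < \<delta> \<longrightarrow> q (sv_diff (g t) w) < \<epsilon>) \<longleftrightarrow>
      ((\<lambda>t. q (sv_diff (g t) w)) \<longlongrightarrow> 0) (at 0)"
    unfolding sv_seminorm_tendsto_0_iff[OF \<open>q \<in> sv_seminorms SA SB\<close>] eventually_at dist_real_def
    by simp
qed

lemma sv_tendsto_unique:
  assumes F: "F \<noteq> bot" and g1: "sv_tendsto SA SB g w1 F" and g2: "sv_tendsto SA SB g w2 F"
  shows "w1 = w2"
proof (rule sv_seminorms_separating)
  fix q assume q: "q \<in> sv_seminorms SA SB"
  have "((\<lambda>i. q (sv_diff (g i) w1) + q (sv_diff (g i) w2)) \<longlongrightarrow> 0 + 0) F"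
    using g1 g2 q unfolding sv_tendsto_def by (intro tendsto_add) auto
  moreover have "\<forall>\<^sub>F i in F. q (sv_diff w1 w2) \<le> q (sv_diff (g i) w1) + q (sv_diff (g i) w2)"
  proof (intro always_eventually allI)
    fix i
    show "q (sv_diff w1 w2) \<le> q (sv_diff (g i) w1) + q (sv_diff (g i) w2)"
      using sv_seminorm_diff_triangle[OF q, of w1 w2 "g i"]
        sv_seminorm_diff_commute[OF q, of w1 "g i"] by simp
  qed
  ultimately have "q (sv_diff w1 w2) \<le> 0"
    using F by (simp add: tendsto_lowerbound)
  then show "q (sv_diff w1 w2) = 0" using sv_seminorm_nonneg[OF q] by (rule antisym)
qed

lemma sv_tendsto_cmul:
  assumes "sv_tendsto SA SB g w F"
  shows "sv_tendsto SA SB (\<lambda>i. sv_cmul c (g i)) (sv_cmul c w) F"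
  unfolding sv_tendsto_def
proof
  fix q assume q: "q \<in> sv_seminorms SA SB"
  obtain I where I: "\<forall>c z. q (sv_cmul c z) = \<bar>c I\<bar> * q z" using sv_seminorm_cmul[OF q] by blast
  show "((\<lambda>i. q (sv_diff (sv_cmul c (g i)) (sv_cmul c w))) \<longlongrightarrow> 0) F"
    using assms q unfolding sv_tendsto_def sv_cmul_diff[symmetric] by (simp add: I tendsto_mult_right_zero)
qed

lemma sv_tendsto_cmul_coeff:
  assumes "\<And>J. ((\<lambda>i. c i J) \<longlongrightarrow> c0 J) F"
  shows "sv_tendsto SA SB (\<lambda>i. sv_cmul (c i) z) (sv_cmul c0 z) F"
  unfolding sv_tendsto_def
proof
  fix q assume q: "q \<in> sv_seminorms SA SB"
  obtain J where J: "\<forall>c z. q (sv_cmul c z) = \<bar>c J\<bar> * q z" using sv_seminorm_cmul[OF q] by blast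
  have "((\<lambda>i. \<bar>c i J - c0 J\<bar> * q z) \<longlongrightarrow> \<bar>c0 J - c0 J\<bar> * q z) F"
    by (intro tendsto_intros assms)
  then show "((\<lambda>i. q (sv_diff (sv_cmul (c i) z) (sv_cmul c0 z))) \<longlongrightarrow> 0) F"
    by (simp add: sv_diff_cmul_left J)
qed

end

lemma eventually_at_0_nonzero: "\<forall>\<^sub>F \<tau> in at 0. \<tau> \<noteq> (0::real)"
  by (rule eventually_neq_at_within)

lemma sv_tendsto_eventually_bounded:
  assumes lcA: "lc_space SA" and lcB: "lc_space SB"
    and g: "sv_tendsto SA SB g w F" and q: "q \<in> sv_seminorms SA SB"
  shows "\<forall>\<^sub>F i in F. q (g i) \<le> 1 + q w"
proof -
  have "((\<lambda>i. q (sv_diff (g i) w)) \<longlongrightarrow> 0) F" using g q unfolding sv_tendsto_def by blast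
  then have "\<forall>\<^sub>F i in F. q (sv_diff (g i) w) < 1"
    unfolding sv_seminorm_tendsto_0_iff[OF lcA lcB q] by simp
  then show ?thesis
  proof eventually_elim
    case (elim i)
    then show ?case
      using sv_seminorm_diff_triangle[OF lcA lcB q, of "g i" sv_zero w] by simp
  qed
qed

section \<open>Body, soul and dilations\<close>

lemma bar_space_add:
  assumes a: "a \<in> bar_space n" and b: "b \<in> bar_space n"
  shows "sv_add a b \<in> bar_space n"
proof -
  have "fst a I + fst b I \<noteq> 0 \<Longrightarrow> I \<subseteq> {..<n} \<and> even (card I)" for I
  proof -
    assume "fst a I + fst b I \<noteq> 0"
    then have "fst a I \<noteq> 0 \<or> fst b I \<noteq> 0" by auto
    then show ?thesis using a b unfolding bar_space_def by auto
  qed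
  moreover have "snd a I + snd b I \<noteq> 0 \<Longrightarrow> I \<subseteq> {..<n} \<and> odd (card I)" for I
  proof -
    assume "snd a I + snd b I \<noteq> 0"
    then have "snd a I \<noteq> 0 \<or> snd b I \<noteq> 0" by auto
    then show ?thesis using a b unfolding bar_space_def by auto
  qed
  ultimately show ?thesis unfolding bar_space_def sv_add_def by simp
qed

lemma bar_space_cmul: "a \<in> bar_space n \<Longrightarrow> sv_cmul c a \<in> bar_space n"
  unfolding bar_space_def sv_cmul_def by auto

lemma bar_space_cmul_image: "A \<subseteq> bar_space n \<Longrightarrow> sv_cmul c ` A \<subseteq> bar_space n"
  using bar_space_cmul by blast

lemma bar_space_scale: "a \<in> bar_space n \<Longrightarrow> sv_scale c a \<in> bar_space n"
  unfolding sv_scale_eq_cmul by (rule bar_space_cmul)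

lemma bar_space_scale_image: "A \<subseteq> bar_space n \<Longrightarrow> sv_scale c ` A \<subseteq> bar_space n"
  using bar_space_scale by blast

lemma bar_space_mono:
  assumes "m \<le> n" and "a \<in> bar_space m"
  shows "a \<in> bar_space n"
proof -
  have sub: "I \<subseteq> {..<n}" if "I \<subseteq> {..<m}" for I :: "nat set"
    using that assms(1) by auto
  from assms(2) show ?thesis unfolding bar_space_def by (auto simp: sub)
qed

text \<open>The elements of \<open>(E\<^sub>0 \<otimes> \<Lambda>\<^sup>+\<^sub>0) \<oplus> (E\<^sub>1 \<otimes> \<Lambda>\<^sub>1)\<close>, i.e. those without body.\<close>
definition soul_space :: "nat \<Rightarrow> ('a::real_vector, 'b::real_vector) sv set" where
  "soul_space n = {h \<in> bar_space n. fst h {} = 0}"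

lemma soul_space_subset_bar_space: "soul_space n \<subseteq> bar_space n"
  unfolding soul_space_def by blast

lemma soul_space_add: "a \<in> soul_space n \<Longrightarrow> b \<in> soul_space n \<Longrightarrow> sv_add a b \<in> soul_space n"
  unfolding soul_space_def by (simp add: bar_space_add) (simp add: sv_add_def)

lemma soul_space_scale: "a \<in> soul_space n \<Longrightarrow> sv_scale c a \<in> soul_space n"
  unfolding soul_space_def by (simp add: bar_space_scale) (simp add: sv_scale_def)

lemma sv_zero_in_soul_space: "sv_zero \<in> soul_space n"
  by (simp add: soul_space_def bar_space_def sv_zero_def)

lemma even_plus_part_subset_soul_space: "even_plus_part n \<subseteq> soul_space n"
  unfolding even_plus_part_def soul_space_def by blast

lemma odd_part_subset_soul_space: "odd_part n \<subseteq> soul_space n"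
  unfolding odd_part_def soul_space_def by auto

text \<open>Coefficients of the dilation \<open>\<lambda>\<^sub>i \<mapsto> s \<lambda>\<^sub>i\<close> of \<open>\<Lambda>\<^sub>n\<close>, which multiplies \<open>\<lambda>\<^sub>I\<close> by
  \<open>s\<^bsup>|I|\<^esup>\<close>. On the soul it factors as \<open>s\<close> times the \<open>reduced_dilation\<close>, which stays
  bounded as \<open>s \<rightarrow> 0\<close>.\<close>
definition dilation :: "nat \<Rightarrow> real \<Rightarrow> nat set \<Rightarrow> real" where
  "dilation n s I = (if I \<subseteq> {..<n} then s ^ card I else 0)"

definition reduced_dilation :: "nat \<Rightarrow> real \<Rightarrow> nat set \<Rightarrow> real" where
  "reduced_dilation n s I = (if I \<subseteq> {..<n} then s ^ (card I - 1) else 0)"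

lemma dilation_mult: "dilation n a I * dilation n b I = dilation n (a * b) I"
  unfolding dilation_def by (simp add: power_mult_distrib)

lemma dilation_tendsto: "((\<lambda>s. dilation n s J) \<longlongrightarrow> dilation n s0 J) (at s0)"
proof (cases "J \<subseteq> {..<n}")
  case True
  show ?thesis unfolding dilation_def if_P[OF True] by (intro tendsto_power tendsto_ident_at)
qed (simp add: dilation_def)

lemma reduced_dilation_tendsto:
  "((\<lambda>s. reduced_dilation n s J) \<longlongrightarrow> reduced_dilation n s0 J) (at s0)"
proof (cases "J \<subseteq> {..<n}")
  case True
  show ?thesis unfolding reduced_dilation_def if_P[OF True] by (intro tendsto_power tendsto_ident_at)
qed (simp add: reduced_dilation_def)

lemma sv_cmul_dilation_1: "a \<in> bar_space n \<Longrightarrow> sv_cmul (dilation n 1) a = a"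
  by (rule sv_eqI) (auto simp: sv_cmul_def dilation_def bar_space_def)

lemma sv_cmul_dilation_body:
  assumes "x \<in> bar_space 0"
  shows "sv_cmul (dilation n s) x = x"
proof (rule sv_eqI)
  fix I
  have "I \<noteq> {} \<Longrightarrow> fst x I = 0" and x1: "snd x I = 0"
    using assms unfolding bar_space_def by fastforce+
  then show "fst (sv_cmul (dilation n s) x) I = fst x I"
    by (cases "I = {}") (simp_all add: sv_cmul_def dilation_def)
  show "snd (sv_cmul (dilation n s) x) I = snd x I"
    by (simp add: sv_cmul_def x1)
qed

lemma dilation_eq_mult_reduced: "I \<noteq> {} \<Longrightarrow> dilation n s I = s * reduced_dilation n s I"
proof (cases "I \<subseteq> {..<n}")
  case True
  moreover assume "I \<noteq> {}"
  ultimately have "card I \<noteq> 0" using finite_subset[OF True] by simp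
  with True show ?thesis unfolding dilation_def reduced_dilation_def by (simp flip: power_Suc)
qed (simp add: dilation_def reduced_dilation_def)

lemma sv_cmul_dilation_soul:
  assumes "a \<in> soul_space n"
  shows "sv_cmul (dilation n s) a = sv_scale s (sv_cmul (reduced_dilation n s) a)"
proof (rule sv_eqI)
  have a0: "fst a {} = 0" "snd a {} = 0"
    using assms unfolding soul_space_def bar_space_def by auto
  fix I
  show "fst (sv_cmul (dilation n s) a) I = fst (sv_scale s (sv_cmul (reduced_dilation n s) a)) I"
    using a0 by (cases "I = {}") (simp_all add: sv_cmul_def sv_scale_def dilation_eq_mult_reduced)
  show "snd (sv_cmul (dilation n s) a) I = snd (sv_scale s (sv_cmul (reduced_dilation n s) a)) I"
    using a0 by (cases "I = {}") (simp_all add: sv_cmul_def sv_scale_def dilation_eq_mult_reduced)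
qed

definition grass_dilation :: "real \<Rightarrow> grass \<Rightarrow> grass" where
  "grass_dilation s a = (\<lambda>I. s ^ card I * a I)"

lemma grass_dilation_gmult: "grass_dilation s (gmult a b) = gmult (grass_dilation s a) (grass_dilation s b)"
proof
  fix K
  show "grass_dilation s (gmult a b) K = gmult (grass_dilation s a) (grass_dilation s b) K"
  proof (cases "finite K")
    case True
    have "s ^ card K = s ^ card I * s ^ card (K - I)" if "I \<subseteq> K" for I
      using True that by (simp add: card_Diff_subset card_mono finite_subset flip: power_add)
    then show ?thesis
      unfolding grass_dilation_def gmult_def sum_distrib_left
      by (intro sum.cong refl) (simp add: algebra_simps)
  next
    case False
    then show ?thesis unfolding grass_dilation_def gmult_def by simp
  qed
qed

lemma gr_hom_grass_dilation: "gr_hom n n (grass_dilation s)"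
  unfolding gr_hom_def
proof (intro conjI ballI allI)
  show "grass_dilation s (gmult a b) = gmult (grass_dilation s a) (grass_dilation s b)" for a b
    by (rule grass_dilation_gmult)
  show "grass_dilation s a \<in> grass n" if "a \<in> grass n" for a
    using that by (simp add: grass_def grass_dilation_def)
  show "grass_dilation s (\<lambda>I. a I + b I) = (\<lambda>I. grass_dilation s a I + grass_dilation s b I)" for a b
    by (simp add: grass_dilation_def distrib_left)
  show "grass_dilation s (\<lambda>I. c * a I) = (\<lambda>I. c * grass_dilation s a I)" for c a
    by (simp add: grass_dilation_def mult.left_commute)
  show "grass_dilation s (gbasis {}) = gbasis {}"
    by (auto simp: grass_dilation_def gbasis_def)
  show "grass_dilation s ` gr_even n \<subseteq> gr_even n" and "grass_dilation s ` gr_odd n \<subseteq> gr_odd n"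
    by (auto simp: gr_even_def gr_odd_def grass_def grass_dilation_def)
qed

lemma sum_grass_dilation_gbasis:
  fixes v :: "nat set \<Rightarrow> 'v::real_vector"
  shows "(\<Sum>I\<in>Pow {..<n}. grass_dilation s (gbasis I) J *\<^sub>R v I) = dilation n s J *\<^sub>R v J"
proof -
  have "(\<Sum>I\<in>Pow {..<n}. grass_dilation s (gbasis I) J *\<^sub>R v I)
      = (\<Sum>I\<in>Pow {..<n}. if I = J then s ^ card J *\<^sub>R v J else 0)"
    by (intro sum.cong refl) (auto simp: grass_dilation_def gbasis_def)
  then show ?thesis by (simp add: dilation_def)
qed

lemma bar_map_grass_dilation: "bar_map n (grass_dilation s) z = sv_cmul (dilation n s) z"
  unfolding bar_map_def sv_cmul_def sum_grass_dilation_gbasis ..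

lemma gr_hom_id: "gr_hom 0 n id"
  unfolding gr_hom_def grass_def gr_even_def gr_odd_def gbasis_def by auto

lemma bar_map_id_body:
  assumes "x \<in> bar_space 0"
  shows "bar_map 0 id x = x"
proof -
  have "fst x I = 0 \<or> I = {}" and "snd x I = 0" for I
    using assms unfolding bar_space_def by fastforce+
  moreover have "Pow {..<0::nat} = {{}}" by auto
  ultimately show ?thesis by (intro sv_eqI) (auto simp: bar_map_def gbasis_def)
qed

lemma sv_open_subset: "sv_open SA SB n V \<Longrightarrow> V \<subseteq> bar_space n"
  unfolding sv_open_def by blast

context
  fixes SA :: "('a::real_vector \<Rightarrow> real) set" and SB :: "('b::real_vector \<Rightarrow> real) set"
  assumes lcA: "lc_space SA" and lcB: "lc_space SB"
begin

lemma sv_open_eventually_mem: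
  assumes V: "sv_open SA SB n V" and x: "x \<in> V"
    and g: "sv_tendsto SA SB g x F" and g_bar: "\<forall>\<^sub>F i in F. g i \<in> bar_space n"
  shows "\<forall>\<^sub>F i in F. g i \<in> V"
proof -
  obtain P \<epsilon> where P: "finite P" "P \<subseteq> sv_seminorms SA SB" "\<epsilon> > 0"
    and ball: "{y \<in> bar_space n. \<forall>p\<in>P. p (sv_diff y x) < \<epsilon>} \<subseteq> V"
    using V x unfolding sv_open_def by blast
  have "\<forall>\<^sub>F i in F. \<forall>p\<in>P. p (sv_diff (g i) x) < \<epsilon>"
  proof (intro eventually_ball_finite P(1) ballI)
    fix p assume "p \<in> P"
    with P(2) have p: "p \<in> sv_seminorms SA SB" by blast
    with g have "((\<lambda>i. p (sv_diff (g i) x)) \<longlongrightarrow> 0) F" unfolding sv_tendsto_def by blast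
    with P(3) show "\<forall>\<^sub>F i in F. p (sv_diff (g i) x) < \<epsilon>"
      unfolding sv_seminorm_tendsto_0_iff[OF lcA lcB p] by blast
  qed
  with g_bar show ?thesis
    by eventually_elim (use ball in blast)
qed

lemma sv_tendsto_line: "sv_tendsto SA SB (\<lambda>\<tau>. sv_add y (sv_scale \<tau> h)) y (at 0)"
  unfolding sv_tendsto_def
proof
  fix q assume "q \<in> sv_seminorms SA SB"
  moreover have "((\<lambda>\<tau>::real. \<bar>\<tau>\<bar> * q h) \<longlongrightarrow> 0) (at 0)"
    using tendsto_mult_left_zero[OF tendsto_rabs_zero[OF tendsto_ident_at[of 0 UNIV]]] by simp
  ultimately show "((\<lambda>\<tau>. q (sv_diff (sv_add y (sv_scale \<tau> h)) y)) \<longlongrightarrow> 0) (at 0)"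
    by (simp add: sv_seminorm_scale[OF lcA lcB])
qed

lemma sv_open_line:
  assumes V: "sv_open SA SB n V" and y: "y \<in> V" and h: "h \<in> bar_space n"
  shows "\<forall>\<^sub>F \<tau> in at 0. sv_add y (sv_scale \<tau> h) \<in> V"
proof (rule sv_open_eventually_mem[OF V y sv_tendsto_line])
  show "\<forall>\<^sub>F \<tau> in at 0. sv_add y (sv_scale \<tau> h) \<in> bar_space n"
    using sv_open_subset[OF V] y h by (auto intro!: always_eventually bar_space_add bar_space_scale)
qed

end

lemma sv_cont_lists_tendsto:
  assumes lcA: "lc_space SA" and lcB: "lc_space SB" and lcC: "lc_space SC" and lcD: "lc_space SD"
    and G: "sv_cont_lists SA SB SC SD n V k G"
    and xs: "length xs = Suc k" "hd xs \<in> V" "set xs \<subseteq> bar_space n"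
    and ys: "\<forall>\<^sub>F i in F. length (ys i) = Suc k \<and> hd (ys i) \<in> V \<and> set (ys i) \<subseteq> bar_space n"
    and lim: "\<And>j. j < Suc k \<Longrightarrow> sv_tendsto SA SB (\<lambda>i. ys i ! j) (xs ! j) F"
  shows "sv_tendsto SC SD (\<lambda>i. G (ys i)) (G xs) F"
  unfolding sv_tendsto_def
proof
  fix q assume q: "q \<in> sv_seminorms SC SD"
  show "((\<lambda>i. q (sv_diff (G (ys i)) (G xs))) \<longlongrightarrow> 0) F"
    unfolding sv_seminorm_tendsto_0_iff[OF lcC lcD q]
  proof (intro allI impI)
    fix \<epsilon> :: real assume "\<epsilon> > 0"
    have "\<exists>P \<delta>. finite P \<and> P \<subseteq> sv_seminorms SA SB \<and> \<delta> > 0 \<and>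
        (\<forall>ys. length ys = Suc k \<and> hd ys \<in> V \<and> set ys \<subseteq> bar_space n \<and>
          (\<forall>j<Suc k. \<forall>p\<in>P. p (sv_diff (ys ! j) (xs ! j)) < \<delta>) \<longrightarrow> q (sv_diff (G ys) (G xs)) < \<epsilon>)"
      by (rule G[unfolded sv_cont_lists_def, rule_format]) (use xs q \<open>\<epsilon> > 0\<close> in auto)
    then obtain P \<delta> where P: "finite P" "P \<subseteq> sv_seminorms SA SB" "\<delta> > 0"
      and close: "\<forall>ys. length ys = Suc k \<and> hd ys \<in> V \<and> set ys \<subseteq> bar_space n \<and>
          (\<forall>j<Suc k. \<forall>p\<in>P. p (sv_diff (ys ! j) (xs ! j)) < \<delta>) \<longrightarrow> q (sv_diff (G ys) (G xs)) < \<epsilon>"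
      by blast
    have "\<forall>\<^sub>F i in F. \<forall>j\<in>{..<Suc k}. \<forall>p\<in>P. p (sv_diff (ys i ! j) (xs ! j)) < \<delta>"
    proof (intro eventually_ball_finite finite_lessThan P(1) ballI)
      fix j p assume j: "j \<in> {..<Suc k}" and "p \<in> P"
      with P(2) have p: "p \<in> sv_seminorms SA SB" by blast
      with lim[of j] j have "((\<lambda>i. p (sv_diff (ys i ! j) (xs ! j))) \<longlongrightarrow> 0) F"
        unfolding sv_tendsto_def by simp
      with P(3) show "\<forall>\<^sub>F i in F. p (sv_diff (ys i ! j) (xs ! j)) < \<delta>"
        unfolding sv_seminorm_tendsto_0_iff[OF lcA lcB p] by blast
    qed
    with ys show "\<forall>\<^sub>F i in F. q (sv_diff (G (ys i)) (G xs)) < \<epsilon>"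
      by eventually_elim (auto intro!: close[rule_format])
  qed
qed

lemma has_seminorm_derivative_sv_components:
  assumes "\<And>t. sv_tendsto SC SD (\<lambda>\<tau>. sv_scale (1 / \<tau>) (sv_diff (c (t + \<tau>)) (c t))) (c' t) (at 0)"
  shows "has_seminorm_derivative SC (\<lambda>t. fst (c t) I) (\<lambda>t. fst (c' t) I)"
    and "has_seminorm_derivative SD (\<lambda>t. snd (c t) I) (\<lambda>t. snd (c' t) I)"
proof -
  show "has_seminorm_derivative SC (\<lambda>t. fst (c t) I) (\<lambda>t. fst (c' t) I)"
    unfolding has_seminorm_derivative_def
  proof (intro allI ballI)
    fix t p assume "p \<in> SC"
    then have "((\<lambda>\<tau>. (\<lambda>x. p (fst x I))
        (sv_diff (sv_scale (1 / \<tau>) (sv_diff (c (t + \<tau>)) (c t))) (c' t))) \<longlongrightarrow> 0) (at 0)"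
      using bspec[OF assms[of t, unfolded sv_tendsto_def] sv_seminorms_fstI[where I = I and SB = SD]] by simp
    then show "((\<lambda>\<tau>. p ((1 / \<tau>) *\<^sub>R (fst (c (t + \<tau>)) I - fst (c t) I) - fst (c' t) I))
        \<longlongrightarrow> 0) (at 0)"
      by (simp add: sv_diff_def sv_scale_def)
  qed
  show "has_seminorm_derivative SD (\<lambda>t. snd (c t) I) (\<lambda>t. snd (c' t) I)"
    unfolding has_seminorm_derivative_def
  proof (intro allI ballI)
    fix t p assume "p \<in> SD"
    then have "((\<lambda>\<tau>. (\<lambda>x. p (snd x I))
        (sv_diff (sv_scale (1 / \<tau>) (sv_diff (c (t + \<tau>)) (c t))) (c' t))) \<longlongrightarrow> 0) (at 0)"
      using bspec[OF assms[of t, unfolded sv_tendsto_def] sv_seminorms_sndI[where I = I and SA = SC]] by simp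
    then show "((\<lambda>\<tau>. p ((1 / \<tau>) *\<^sub>R (snd (c (t + \<tau>)) I - snd (c t) I) - snd (c' t) I))
        \<longlongrightarrow> 0) (at 0)"
      by (simp add: sv_diff_def sv_scale_def)
  qed
qed

lemma sv_taylor_terminating:
  assumes lcC: "lc_space SC" and lcD: "lc_space SD"
    and deriv: "\<And>j t. j < N \<Longrightarrow>
      sv_tendsto SC SD (\<lambda>\<tau>. sv_scale (1 / \<tau>) (sv_diff (c j (t + \<tau>)) (c j t))) (c (Suc j) t) (at 0)"
    and stop: "\<And>t. c N t = sv_zero"
  shows "c 0 t = sv_sum (\<lambda>j. sv_scale (t ^ j / fact j) (c j 0)) {..<N}"
proof (rule sv_eqI)
  fix I
  have "fst (c 0 t) I = (\<Sum>j<N. (t ^ j / fact j) *\<^sub>R fst (c j 0) I)"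
    using has_seminorm_derivative_sv_components(1)[OF deriv] stop
    by (intro seminorm_taylor_terminating[OF lcC, where c = "\<lambda>j t. fst (c j t) I"])
      (auto simp: sv_zero_def)
  then show "fst (c 0 t) I = fst (sv_sum (\<lambda>j. sv_scale (t ^ j / fact j) (c j 0)) {..<N}) I"
    by (simp add: sv_sum_def sv_scale_def)
  have "snd (c 0 t) I = (\<Sum>j<N. (t ^ j / fact j) *\<^sub>R snd (c j 0) I)"
    using has_seminorm_derivative_sv_components(2)[OF deriv] stop
    by (intro seminorm_taylor_terminating[OF lcD, where c = "\<lambda>j t. snd (c j t) I"])
      (auto simp: sv_zero_def)
  then show "snd (c 0 t) I = snd (sv_sum (\<lambda>j. sv_scale (t ^ j / fact j) (c j 0)) {..<N}) I"
    by (simp add: sv_sum_def sv_scale_def)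
qed

section \<open>Smooth maps commuting with dilations\<close>

locale dilation_equivariant_smooth =
  fixes SA :: "('a::real_vector \<Rightarrow> real) set" and SB :: "('b::real_vector \<Rightarrow> real) set"
    and SC :: "('c::real_vector \<Rightarrow> real) set" and SD :: "('d::real_vector \<Rightarrow> real) set"
    and n :: nat and V :: "('a, 'b) sv set" and F :: "('a, 'b) sv \<Rightarrow> ('c, 'd) sv"
  assumes lcA: "lc_space SA" and lcB: "lc_space SB" and lcC: "lc_space SC" and lcD: "lc_space SD"
    and smooth: "bastiani_smooth SA SB SC SD n V F"
    and dilation_closed: "\<And>y s. y \<in> V \<Longrightarrow> sv_cmul (dilation n s) y \<in> V"
    and dilation_equivariant: "\<And>y s. y \<in> V \<Longrightarrow> F (sv_cmul (dilation n s) y) = sv_cmul (dilation n s) (F y)"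
begin

abbreviation D :: "('a, 'b) sv \<Rightarrow> ('a, 'b) sv list \<Rightarrow> ('c, 'd) sv" where
  "D y hs \<equiv> diff_iter SC SD F y hs"

lemma open_V: "sv_open SA SB n V"
  using smooth unfolding bastiani_smooth_def by blast

lemma V_subset_bar_space: "V \<subseteq> bar_space n"
  by (rule sv_open_subset[OF open_V])

lemma diff_iter_continuous: "sv_cont_lists SA SB SC SD n V k (\<lambda>ys. D (hd ys) (tl ys))"
  using smooth unfolding bastiani_smooth_def by blast

lemma diff_iter_Cons_tendsto:
  assumes z: "z \<in> V" and h: "h \<in> bar_space n" and hs: "set hs \<subseteq> bar_space n"
  shows "sv_tendsto SC SD (diff_quot (\<lambda>y. D y hs) z h) (D z (h # hs)) (at 0)"
proof -
  have "\<forall>x\<in>V. \<forall>h hs. set (h # hs) \<subseteq> bar_space n \<longrightarrow>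
      (\<exists>w. sv_lim0 SC SD (diff_quot (\<lambda>y. D y hs) x h) w)"
    using smooth unfolding bastiani_smooth_def by blast
  moreover have "set (h # hs) \<subseteq> bar_space n" using h hs by simp
  ultimately have "\<exists>w. sv_lim0 SC SD (diff_quot (\<lambda>y. D y hs) z h) w"
    using z by blast
  then obtain w where w: "sv_tendsto SC SD (diff_quot (\<lambda>y. D y hs) z h) w (at 0)"
    unfolding sv_lim0_iff_sv_tendsto[OF lcC lcD] by blast
  have "dir_deriv SC SD (\<lambda>y. D y hs) z h = w"
    unfolding dir_deriv_def sv_lim0_iff_sv_tendsto[OF lcC lcD]
    using w sv_tendsto_unique[OF lcC lcD at_neq_bot _ w] by blast
  with w show ?thesis by simp
qed

lemma diff_iter_Cons_eqI:
  assumes z: "z \<in> V" and h: "h \<in> bar_space n" and hs: "set hs \<subseteq> bar_space n"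
    and g: "sv_tendsto SC SD g w (at 0)"
    and eq: "\<forall>\<^sub>F \<tau> in at 0. diff_quot (\<lambda>y. D y hs) z h \<tau> = g \<tau>"
  shows "D z (h # hs) = w"
proof -
  have "sv_tendsto SC SD g (D z (h # hs)) (at 0)"
    by (rule sv_tendsto_cong[OF eq diff_iter_Cons_tendsto[OF z h hs]])
  then show ?thesis by (rule sv_tendsto_unique[OF lcC lcD at_neq_bot _ g])
qed

lemma diff_iter_dilation:
  assumes "set hs \<subseteq> bar_space n" and "y \<in> V"
  shows "sv_cmul (dilation n s) (D y hs) = D (sv_cmul (dilation n s) y) (map (sv_cmul (dilation n s)) hs)"
  using assms
proof (induction hs arbitrary: y)
  case Nil
  then show ?case by (simp add: dilation_equivariant)
next
  case (Cons h hs)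
  let ?T = "sv_cmul (dilation n s)"
  have y: "y \<in> V" and h: "h \<in> bar_space n" and hs: "set hs \<subseteq> bar_space n" using Cons.prems by auto
  have "D (?T y) (?T h # map ?T hs) = ?T (D y (h # hs))"
  proof (rule diff_iter_Cons_eqI)
    show "?T y \<in> V" "?T h \<in> bar_space n" "set (map ?T hs) \<subseteq> bar_space n"
      using dilation_closed[OF y] h hs by (simp_all add: bar_space_cmul bar_space_cmul_image)
    show "sv_tendsto SC SD (\<lambda>\<tau>. ?T (diff_quot (\<lambda>z. D z hs) y h \<tau>)) (?T (D y (h # hs))) (at 0)"
      by (rule sv_tendsto_cmul[OF lcC lcD diff_iter_Cons_tendsto[OF y h hs]])
    show "\<forall>\<^sub>F \<tau> in at 0. diff_quot (\<lambda>z. D z (map ?T hs)) (?T y) (?T h) \<tau> = ?T (diff_quot (\<lambda>z. D z hs) y h \<tau>)"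
      using sv_open_line[OF lcA lcB open_V y h]
    proof eventually_elim
      case (elim \<tau>)
      have "sv_add (?T y) (sv_scale \<tau> (?T h)) = ?T (sv_add y (sv_scale \<tau> h))"
        by (simp only: sv_cmul_add sv_cmul_scale)
      then show ?case
        using Cons.IH[OF hs elim] Cons.IH[OF hs y]
        by (simp add: diff_quot_def sv_cmul_diff sv_cmul_scale)
    qed
  qed
  then show ?case by simp
qed

lemma sv_scale_diff_quot_rescale:
  assumes "s \<noteq> 0" and "\<tau> \<noteq> 0"
  shows "sv_scale (1 / \<tau>) (sv_diff (sv_scale a X) (sv_scale a Y))
    = sv_scale (a * s) (sv_scale (1 / (s * \<tau>)) (sv_diff X Y))"
  using assms by (intro sv_eqI) (simp_all add: sv_diff_def sv_scale_def algebra_simps)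

lemma diff_iter_scale_directions:
  assumes "set hs \<subseteq> bar_space n" and s: "s \<noteq> 0" and "z \<in> V"
  shows "D z (map (sv_scale s) hs) = sv_scale (s ^ length hs) (D z hs)"
  using assms(1,3)
proof (induction hs arbitrary: z)
  case Nil
  then show ?case by simp
next
  case (Cons k ks)
  have z: "z \<in> V" and k: "k \<in> bar_space n" and ks: "set ks \<subseteq> bar_space n" using Cons.prems by auto
  let ?N = "length ks"
  have "\<forall>\<^sub>F \<tau> in at 0. s * \<tau> \<noteq> 0"
    using eventually_at_0_nonzero by eventually_elim (simp add: s)
  then have lim_s: "filterlim (\<lambda>\<tau>. s * \<tau>) (at 0) (at 0)"
    by (intro filterlim_atI tendsto_mult_right_zero tendsto_ident_at)
  have "D z (sv_scale s k # map (sv_scale s) ks) = sv_scale (s ^ Suc ?N) (D z (k # ks))"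
  proof (rule diff_iter_Cons_eqI)
    show "z \<in> V" "sv_scale s k \<in> bar_space n" "set (map (sv_scale s) ks) \<subseteq> bar_space n"
      using z k ks by (simp_all add: bar_space_scale bar_space_scale_image)
    show "sv_tendsto SC SD (\<lambda>\<tau>. sv_scale (s ^ Suc ?N) (diff_quot (\<lambda>y. D y ks) z k (s * \<tau>)))
        (sv_scale (s ^ Suc ?N) (D z (k # ks))) (at 0)"
      unfolding sv_scale_eq_cmul
      by (intro sv_tendsto_cmul[OF lcC lcD] sv_tendsto_compose[OF diff_iter_Cons_tendsto[OF z k ks] lim_s])
    have "\<forall>\<^sub>F \<tau> in at 0. sv_add z (sv_scale (s * \<tau>) k) \<in> V"
      using eventually_compose_filterlim[OF sv_open_line[OF lcA lcB open_V z k] lim_s] .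
    then show "\<forall>\<^sub>F \<tau> in at 0. diff_quot (\<lambda>y. D y (map (sv_scale s) ks)) z (sv_scale s k) \<tau>
        = sv_scale (s ^ Suc ?N) (diff_quot (\<lambda>y. D y ks) z k (s * \<tau>))"
      using eventually_at_0_nonzero
    proof eventually_elim
      case (elim \<tau>)
      have "sv_add z (sv_scale \<tau> (sv_scale s k)) = sv_add z (sv_scale (s * \<tau>) k)"
        by (simp add: sv_scale_scale mult.commute)
      then show ?case
        unfolding diff_quot_def
        by (simp only: Cons.IH[OF ks elim(1)] Cons.IH[OF ks z] sv_scale_diff_quot_rescale[OF s elim(2)]
            power_Suc2)
    qed
  qed
  then show ?case by simp
qed

lemma diff_iter_soul_dilation:
  assumes hs: "set hs \<subseteq> soul_space n" and y: "y \<in> V" and s: "s \<noteq> 0"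
  shows "sv_cmul (dilation n s) (D y hs)
    = sv_scale (s ^ length hs) (D (sv_cmul (dilation n s) y) (map (sv_cmul (reduced_dilation n s)) hs))"
proof -
  have hs_bar: "set hs \<subseteq> bar_space n" using hs soul_space_subset_bar_space by blast
  have "sv_cmul (dilation n s) (D y hs)
      = D (sv_cmul (dilation n s) y) (map (sv_cmul (dilation n s)) hs)"
    by (rule diff_iter_dilation[OF hs_bar y])
  also have "map (sv_cmul (dilation n s)) hs = map (sv_scale s) (map (sv_cmul (reduced_dilation n s)) hs)"
    using hs by (auto simp: sv_cmul_dilation_soul)
  also have "D (sv_cmul (dilation n s) y) \<dots> = sv_scale (s ^ length (map (sv_cmul (reduced_dilation n s)) hs))
      (D (sv_cmul (dilation n s) y) (map (sv_cmul (reduced_dilation n s)) hs))"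
    by (rule diff_iter_scale_directions[OF _ s])
      (use hs_bar dilation_closed[OF y] in \<open>simp_all add: bar_space_cmul_image\<close>)
  finally show ?thesis by simp
qed

lemma diff_iter_dilated_bounded:
  assumes y: "y \<in> V" and hs: "set hs \<subseteq> bar_space n" and q: "q \<in> sv_seminorms SC SD"
  shows "\<exists>B. \<forall>\<^sub>F s in at 0.
    q (D (sv_cmul (dilation n s) y) (map (sv_cmul (reduced_dilation n s)) hs)) \<le> B"
proof -
  let ?ys = "\<lambda>s. sv_cmul (dilation n s) y # map (sv_cmul (reduced_dilation n s)) hs"
  have ys: "length (?ys s) = Suc (length hs) \<and> hd (?ys s) \<in> V \<and> set (?ys s) \<subseteq> bar_space n" for s
    using dilation_closed[OF y] subsetD[OF V_subset_bar_space dilation_closed[OF y]]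
    by (simp add: bar_space_cmul_image[OF hs])
  have lim: "sv_tendsto SA SB (\<lambda>s. ?ys s ! j) (?ys 0 ! j) (at 0)" if "j < Suc (length hs)" for j
  proof (cases j)
    case 0
    then show ?thesis by (simp add: sv_tendsto_cmul_coeff[OF lcA lcB dilation_tendsto])
  next
    case (Suc i)
    with that show ?thesis by (simp add: sv_tendsto_cmul_coeff[OF lcA lcB reduced_dilation_tendsto])
  qed
  have "sv_tendsto SC SD (\<lambda>s. D (hd (?ys s)) (tl (?ys s))) (D (hd (?ys 0)) (tl (?ys 0))) (at 0)"
  proof (rule sv_cont_lists_tendsto[OF lcA lcB lcC lcD diff_iter_continuous[of "length hs"]])
    show "length (?ys 0) = Suc (length hs)" "hd (?ys 0) \<in> V" "set (?ys 0) \<subseteq> bar_space n"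
      using ys[of 0] by simp_all
    show "\<forall>\<^sub>F s in at 0. length (?ys s) = Suc (length hs) \<and> hd (?ys s) \<in> V \<and> set (?ys s) \<subseteq> bar_space n"
      by (intro always_eventually allI ys)
  qed (rule lim)
  from sv_tendsto_eventually_bounded[OF lcC lcD this q] show ?thesis by auto
qed

lemma sv_cmul_dilation_1_diff_iter:
  assumes y: "y \<in> V" and hs: "set hs \<subseteq> bar_space n"
  shows "sv_cmul (dilation n 1) (D y hs) = D y hs"
proof -
  have "map (sv_cmul (dilation n 1)) hs = hs"
    by (rule map_idI) (use hs sv_cmul_dilation_1 in blast)
  moreover have "sv_cmul (dilation n 1) y = y"
    by (rule sv_cmul_dilation_1) (use y V_subset_bar_space in blast)
  ultimately show ?thesis using diff_iter_dilation[OF hs y, of 1] by simp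
qed

lemma diff_iter_soul_component_vanishes:
  assumes y: "y \<in> V" and hs: "set hs \<subseteq> soul_space n" and len: "n < length hs"
    and q: "q \<in> sv_seminorms SC SD" and I: "\<And>c z. q (sv_cmul c z) = \<bar>c I\<bar> * q z"
    and I_n: "I \<subseteq> {..<n}"
  shows "q (D y hs) = 0"
proof -
  let ?W = "D y hs" and ?N = "length hs" and ?m = "card I"
  have m: "?m < ?N" using card_mono[OF finite_lessThan I_n] len by simp
  obtain B where B: "\<forall>\<^sub>F s in at 0.
      q (D (sv_cmul (dilation n s) y) (map (sv_cmul (reduced_dilation n s)) hs)) \<le> B"
    using diff_iter_dilated_bounded[OF y _ q] hs soul_space_subset_bar_space by blast
  have "\<forall>\<^sub>F s in at 0. q ?W \<le> \<bar>s\<bar> ^ (?N - ?m) * B"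
    using B eventually_at_0_nonzero
  proof eventually_elim
    case (elim s)
    have "\<bar>s\<bar> ^ ?m * q ?W = q (sv_cmul (dilation n s) ?W)"
      using I_n by (simp add: I dilation_def power_abs)
    also have "\<dots> = \<bar>s\<bar> ^ ?N *
        q (D (sv_cmul (dilation n s) y) (map (sv_cmul (reduced_dilation n s)) hs))"
      by (simp add: diff_iter_soul_dilation[OF hs y elim(2)] sv_seminorm_scale[OF lcC lcD q] power_abs)
    also have "\<dots> \<le> \<bar>s\<bar> ^ ?N * B"
      using elim(1) by (simp add: mult_left_mono)
    also have "\<bar>s\<bar> ^ ?N = \<bar>s\<bar> ^ ?m * \<bar>s\<bar> ^ (?N - ?m)"
      using m by (simp flip: power_add)
    finally show ?case
      using elim(2) by (simp add: mult.assoc mult_le_cancel_left_pos)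
  qed
  moreover have "((\<lambda>s::real. \<bar>s\<bar> ^ (?N - ?m) * B) \<longlongrightarrow> \<bar>0\<bar> ^ (?N - ?m) * B) (at 0)"
    by (intro tendsto_mult tendsto_power tendsto_rabs tendsto_ident_at tendsto_const)
  ultimately have "q ?W \<le> \<bar>0\<bar> ^ (?N - ?m) * B"
    by (intro tendsto_lowerbound) auto
  then show ?thesis using m sv_seminorm_nonneg[OF lcC lcD q, of ?W] by (simp add: power_0_left)
qed

lemma diff_iter_soul_vanishes:
  assumes y: "y \<in> V" and hs: "set hs \<subseteq> soul_space n" and len: "n < length hs"
  shows "D y hs = sv_zero"
proof (rule sv_seminorms_separating[OF lcC lcD])
  fix q assume q: "q \<in> sv_seminorms SC SD"
  obtain I where I: "\<And>c z. q (sv_cmul c z) = \<bar>c I\<bar> * q z"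
    using sv_seminorm_cmul[OF lcC lcD q] by blast
  have "q (D y hs) = 0"
  proof (cases "I \<subseteq> {..<n}")
    case False
    have "q (D y hs) = \<bar>dilation n 1 I\<bar> * q (D y hs)"
      using I sv_cmul_dilation_1_diff_iter[OF y] hs soul_space_subset_bar_space by (metis order_trans)
    with False show ?thesis by (simp add: dilation_def)
  qed (rule diff_iter_soul_component_vanishes[OF y hs len q I])
  then show "q (sv_diff (D y hs) sv_zero) = 0" by simp
qed

lemma line_taylor:
  assumes line: "\<And>t. sv_add y (sv_scale t h) \<in> V"
    and h: "h \<in> soul_space n" and hs: "set hs \<subseteq> soul_space n"
  shows "D (sv_add y h) hs = sv_sum (\<lambda>j. sv_scale (1 / fact j) (D y (replicate j h @ hs))) {..n}"
proof -
  let ?c = "\<lambda>j t. D (sv_add y (sv_scale t h)) (replicate j h @ hs)"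
  have h_bar: "h \<in> bar_space n" and hs_bar: "set hs \<subseteq> bar_space n"
    using h hs soul_space_subset_bar_space by blast+
  have "?c 0 1 = sv_sum (\<lambda>j. sv_scale (1 ^ j / fact j) (?c j 0)) {..<Suc n}"
  proof (rule sv_taylor_terminating[OF lcC lcD])
    fix j t
    have "sv_tendsto SC SD (diff_quot (\<lambda>z. D z (replicate j h @ hs)) (sv_add y (sv_scale t h)) h)
        (D (sv_add y (sv_scale t h)) (h # replicate j h @ hs)) (at 0)"
      by (rule diff_iter_Cons_tendsto) (simp_all add: line h_bar hs_bar set_replicate_conv_if)
    then show "sv_tendsto SC SD (\<lambda>\<tau>. sv_scale (1 / \<tau>) (sv_diff (?c j (t + \<tau>)) (?c j t)))
        (?c (Suc j) t) (at 0)"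
      by (simp add: diff_quot_def[abs_def] sv_add_line_shift)
  next
    show "?c (Suc n) t = sv_zero" for t
      by (rule diff_iter_soul_vanishes) (use line h hs in auto)
  qed
  then show ?thesis by (simp add: lessThan_Suc_atMost)
qed

text \<open>Dilate the soul of \<open>x + h\<close> into a neighbourhood of the body point \<open>x \<in> V\<close>, then
  undo the dilation.\<close>
lemma body_add_soul_mem:
  assumes x: "x \<in> V" "x \<in> bar_space 0" and h: "h \<in> soul_space n"
  shows "sv_add x h \<in> V"
proof -
  let ?g = "\<lambda>s. sv_add x (sv_cmul (dilation n s) h)"
  have h_bar: "h \<in> bar_space n" using h soul_space_subset_bar_space by blast
  have "sv_tendsto SA SB (\<lambda>s. sv_cmul (dilation n s) h) (sv_cmul (dilation n 0) h) (at 0)"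
    by (rule sv_tendsto_cmul_coeff[OF lcA lcB dilation_tendsto])
  moreover have "sv_cmul (dilation n 0) h = sv_zero" using sv_cmul_dilation_soul[OF h] by simp
  ultimately have "sv_tendsto SA SB ?g x (at 0)"
    using sv_tendsto_add_left by fastforce
  moreover have "\<forall>\<^sub>F s in at 0. ?g s \<in> bar_space n"
    using bar_space_mono[OF _ x(2)] h_bar by (auto intro!: always_eventually bar_space_add bar_space_cmul)
  ultimately have "\<forall>\<^sub>F s in at 0. ?g s \<in> V \<and> s \<noteq> 0"
    using sv_open_eventually_mem[OF lcA lcB open_V x(1)] eventually_at_0_nonzero
    by (simp add: eventually_conj_iff)
  then obtain s where s: "?g s \<in> V" "s \<noteq> 0"
    using eventually_happens'[OF at_neq_bot] by blast
  have "sv_cmul (dilation n (1 / s)) (?g s) \<in> V" by (rule dilation_closed[OF s(1)])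
  also have "sv_cmul (dilation n (1 / s)) (?g s) = sv_add x h"
    using s(2) by (simp add: sv_cmul_add sv_cmul_dilation_body[OF x(2)] sv_cmul_cmul dilation_mult
        sv_cmul_dilation_1[OF h_bar])
  finally show ?thesis .
qed

lemma body_soul_taylor:
  assumes x: "x \<in> V" "x \<in> bar_space 0"
    and g: "g \<in> soul_space n" and h: "h \<in> soul_space n" and hs: "set hs \<subseteq> soul_space n"
  shows "D (sv_add (sv_add x g) h) hs
    = sv_sum (\<lambda>j. sv_scale (1 / fact j) (D (sv_add x g) (replicate j h @ hs))) {..n}"
proof (rule line_taylor[OF _ h hs])
  fix t
  have "sv_add x (sv_add g (sv_scale t h)) \<in> V"
    using g h by (intro body_add_soul_mem x soul_space_add soul_space_scale)
  then show "sv_add (sv_add x g) (sv_scale t h) \<in> V" by (simp add: sv_add_assoc)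
qed

lemma taylor_expansion_soul:
  assumes x: "x \<in> V" "x \<in> bar_space 0" and h: "h \<in> soul_space n"
  shows "finite {i. sv_scale (1 / fact i) (D x (replicate i h)) \<noteq> sv_zero}"
    and "F (sv_add x h) = sv_sum (\<lambda>i. sv_scale (1 / fact i) (D x (replicate i h)))
      {i. sv_scale (1 / fact i) (D x (replicate i h)) \<noteq> sv_zero}"
proof -
  let ?G = "\<lambda>i. sv_scale (1 / fact i) (D x (replicate i h))"
  have "D x (replicate i h) = sv_zero" if "i \<notin> {..n}" for i
    by (rule diff_iter_soul_vanishes[OF x(1)]) (use that h in \<open>auto simp: set_replicate_conv_if\<close>)
  then have "?G i = sv_zero" if "i \<notin> {..n}" for i
    using that by simp
  note support = sv_sum_support[of "{..n}" ?G, OF _ this]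
  have "F (sv_add x h) = sv_sum ?G {..n}"
    using body_soul_taylor[OF x sv_zero_in_soul_space h, of "[]"] by simp
  with support show "finite {i. ?G i \<noteq> sv_zero}" and "F (sv_add x h) = sv_sum ?G {i. ?G i \<noteq> sv_zero}"
    by simp_all
qed

lemma taylor_expansion_soul_pair:
  assumes x: "x \<in> V" "x \<in> bar_space 0" and g: "g \<in> soul_space n" and h: "h \<in> soul_space n"
  shows "finite {(m, l). sv_scale (1 / (fact m * fact l)) (D x (replicate m g @ replicate l h)) \<noteq> sv_zero}"
    and "F (sv_add (sv_add x g) h) =
      sv_sum (\<lambda>(m, l). sv_scale (1 / (fact m * fact l)) (D x (replicate m g @ replicate l h)))
        {(m, l). sv_scale (1 / (fact m * fact l)) (D x (replicate m g @ replicate l h)) \<noteq> sv_zero}"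
proof -
  let ?E = "\<lambda>(m, l). sv_scale (1 / (fact m * fact l)) (D x (replicate m g @ replicate l h))"
  have "D x (replicate m g @ replicate l h) = sv_zero" if "(m, l) \<notin> {..n} \<times> {..n}" for m l
    by (rule diff_iter_soul_vanishes[OF x(1)]) (use that g h in \<open>auto simp: set_replicate_conv_if\<close>)
  then have "?E i = sv_zero" if "i \<notin> {..n} \<times> {..n}" for i
    using that by (cases i) simp
  note support = sv_sum_support[of "{..n} \<times> {..n}" ?E, OF _ this]
  have "F (sv_add (sv_add x g) h)
      = sv_sum (\<lambda>l. sv_scale (1 / fact l) (D (sv_add x g) (replicate l h))) {..n}"
    using body_soul_taylor[OF x g h, of "[]"] by simp
  also have "\<dots> = sv_sum (\<lambda>l. sv_scale (1 / fact l)
      (sv_sum (\<lambda>m. sv_scale (1 / fact m) (D x (replicate m g @ replicate l h))) {..n})) {..n}"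
    using body_soul_taylor[OF x sv_zero_in_soul_space g] h by (simp add: set_replicate_conv_if)
  also have "\<dots> = sv_sum ?E ({..n} \<times> {..n})"
    by (simp add: sv_sum_scale_sv_sum)
  finally have "F (sv_add (sv_add x g) h) = sv_sum ?E ({..n} \<times> {..n})" .
  moreover have "{(m, l). ?E (m, l) \<noteq> sv_zero} = {i. ?E i \<noteq> sv_zero}" by auto
  ultimately show
    "finite {(m, l). sv_scale (1 / (fact m * fact l)) (D x (replicate m g @ replicate l h)) \<noteq> sv_zero}"
    "F (sv_add (sv_add x g) h) = sv_sum ?E
      {(m, l). sv_scale (1 / (fact m * fact l)) (D x (replicate m g @ replicate l h)) \<noteq> sv_zero}"
    using support by simp_all
qed

end

lemma dilation_equivariant_smooth_subfunctor:
  assumes "lc_space SA" and "lc_space SB" and "lc_space SC" and "lc_space SD"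
    and U: "open_subfunctor k SA SB U" and f: "nat_transf k U f"
    and "bastiani_smooth SA SB SC SD n (U n) (f n)" and n: "enat n \<le> k"
  shows "dilation_equivariant_smooth SA SB SC SD n (U n) (f n)"
proof
  show "sv_cmul (dilation n s) y \<in> U n" if "y \<in> U n" for y s
    using U n that gr_hom_grass_dilation
    unfolding open_subfunctor_def bar_map_grass_dilation[symmetric] by blast
  show "f n (sv_cmul (dilation n s) y) = sv_cmul (dilation n s) (f n y)" if "y \<in> U n" for y s
    using f n that gr_hom_grass_dilation
    unfolding nat_transf_def bar_map_grass_dilation[symmetric] by metis
qed (fact assms)+

lemma open_subfunctor_body:
  assumes U: "open_subfunctor k SA SB U" and n: "enat n \<le> k" and x: "x \<in> U 0"
  shows "x \<in> U n" and "x \<in> bar_space 0"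
proof -
  have k0: "enat 0 \<le> k" by (simp add: zero_enat_def[symmetric])
  show x_body: "x \<in> bar_space 0"
    using U x k0 unfolding open_subfunctor_def sv_open_def by blast
  have "bar_map 0 id x \<in> U n"
    using U n x k0 gr_hom_id unfolding open_subfunctor_def by blast
  then show "x \<in> U n" by (simp add: bar_map_id_body[OF x_body])
qed

theorem mainTheorem5:
  fixes k :: enat
    and SA :: "('a::real_vector \<Rightarrow> real) set" and SB :: "('b::real_vector \<Rightarrow> real) set"
    and SC :: "('c::real_vector \<Rightarrow> real) set" and SD :: "('d::real_vector \<Rightarrow> real) set"
    and U :: "nat \<Rightarrow> ('a, 'b) sv set"
    and f :: "nat \<Rightarrow> ('a, 'b) sv \<Rightarrow> ('c, 'd) sv"
    and n :: nat and x n0 n1 :: "('a, 'b) sv"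
  assumes "lc_space SA" and "lc_space SB" and "lc_space SC" and "lc_space SD"
    and "open_subfunctor k SA SB U"
    and "nat_transf k U f"
    and "\<forall>m. enat m \<le> k \<longrightarrow> bastiani_smooth SA SB SC SD m (U m) (f m)"
    and "enat n \<le> k"
    and "x \<in> U 0"
    and "n0 \<in> even_plus_part n"
    and "n1 \<in> odd_part n"
  shows "sv_add (sv_add x n0) n1 \<in> U n
    \<and> finite {(m, l). sv_scale (1 / (fact m * fact l))
                (diff_iter SC SD (f n) x (replicate m n0 @ replicate l n1)) \<noteq> sv_zero}
    \<and> f n (sv_add (sv_add x n0) n1) =
        sv_sum (\<lambda>(m, l). sv_scale (1 / (fact m * fact l))
                (diff_iter SC SD (f n) x (replicate m n0 @ replicate l n1)))
          {(m, l). sv_scale (1 / (fact m * fact l))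
                (diff_iter SC SD (f n) x (replicate m n0 @ replicate l n1)) \<noteq> sv_zero}
    \<and> finite {i. sv_scale (1 / fact i) (diff_iter SC SD (f n) x (replicate i (sv_add n0 n1))) \<noteq> sv_zero}
    \<and> f n (sv_add (sv_add x n0) n1) =
        sv_sum (\<lambda>i. sv_scale (1 / fact i) (diff_iter SC SD (f n) x (replicate i (sv_add n0 n1))))
          {i. sv_scale (1 / fact i) (diff_iter SC SD (f n) x (replicate i (sv_add n0 n1))) \<noteq> sv_zero}"
proof -
  interpret f: dilation_equivariant_smooth SA SB SC SD n "U n" "f n"
    using assms(1-8) by (intro dilation_equivariant_smooth_subfunctor) blast+
  have x: "x \<in> U n" "x \<in> bar_space 0" by (rule open_subfunctor_body[OF assms(5,8,9)])+
  have n0: "n0 \<in> soul_space n" and n1: "n1 \<in> soul_space n"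
    using assms(10,11) even_plus_part_subset_soul_space odd_part_subset_soul_space by blast+
  then have n01: "sv_add n0 n1 \<in> soul_space n" by (rule soul_space_add)
  show ?thesis
    using f.body_add_soul_mem[OF x n01] f.taylor_expansion_soul_pair[OF x n0 n1]
      f.taylor_expansion_soul[OF x n01]
    by (simp add: sv_add_assoc)
qed

end
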